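(* Let $\rho$ be an involution of $\Lambda_{K3}=II_{3,19}$ with eigenlattices $S=\Lambda_{K3}^{+}$ (hyperbolic, $2$-elementary) and $T=\Lambda_{K3}^{-}$, and let $e\in T$ be primitive isotropic. Put $\Lambda_{ias}=e^\perp/e\cong II_{2,18}$ (perp taken in $\Lambda_{K3}$), with the induced involution $\rho_{ias}$ and eigenlattices $\Lambda_{ias}^{\pm}$, so that $\Lambda_{ias}^-=\bar T:=(e^\perp\cap T)/e$. Then the projection $e^\perp\to\Lambda_{ias}$ embeds $S$ into $\Lambda_{ias}^+$, and: if $e$ has divisibility $1$ in $T$, then $S=\Lambda_{ias}^+$; if $e$ has divisibility $2$ in $T$, then $S$ is a sublattice of index $2$ in $\Lambda_{ias}^+$ containing $(1+\rho_{ias})\Lambda_{ias}=2(\Lambda_{ias}^+)^*$.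
   Context: A lattice $H$ is $2$-elementary if $H^*/H\cong(\mathbb{Z}/2)^a$. The divisibility of $e\in T$ is the positive generator of $e\cdot T$. $II_{p,q}$ denotes the even unimodular lattice of signature $(p,q)$. *)

theory Defs
  imports "HOL-Analysis.Analysis"
begin

text \<open>The K3 lattice is modelled as the integer points of real^22, with
  bilinear form given by an integral Gram matrix G.\<close>

type_synonym v22 = "real^22"

definition lat :: "v22 set" where
  "lat = {x. \<forall>i. x$i \<in> \<int>}"

definition bf :: "real^22^22 \<Rightarrow> v22 \<Rightarrow> v22 \<Rightarrow> real" where
  "bf G x y = x \<bullet> (G *v y)"

definition int_matrix :: "real^22^22 \<Rightarrow> bool" where
  "int_matrix M \<longleftrightarrow> (\<forall>i j. M$i$j \<in> \<int>)"

definition pos_def_on :: "real^22^22 \<Rightarrow> v22 set \<Rightarrow> bool" where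
  "pos_def_on G W \<longleftrightarrow> (\<forall>w\<in>W. w \<noteq> 0 \<longrightarrow> bf G w w > 0)"

definition neg_def_on :: "real^22^22 \<Rightarrow> v22 set \<Rightarrow> bool" where
  "neg_def_on G W \<longleftrightarrow> (\<forall>w\<in>W. w \<noteq> 0 \<longrightarrow> bf G w w < 0)"

text \<open>Signature (p,q) of the form restricted to a real subspace V:
  p = maximal dimension of a positive definite subspace, q likewise for negative
  definite subspaces, and p + q = dim V (nondegeneracy).\<close>
definition has_signature :: "real^22^22 \<Rightarrow> v22 set \<Rightarrow> nat \<Rightarrow> nat \<Rightarrow> bool" where
  "has_signature G V p q \<longleftrightarrow>
     (\<exists>W. subspace W \<and> W \<subseteq> V \<and> dim W = p \<and> pos_def_on G W) \<and>
     (\<forall>W. subspace W \<and> W \<subseteq> V \<and> pos_def_on G W \<longrightarrow> dim W \<le> p) \<and>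
     (\<exists>W. subspace W \<and> W \<subseteq> V \<and> dim W = q \<and> neg_def_on G W) \<and>
     (\<forall>W. subspace W \<and> W \<subseteq> V \<and> neg_def_on G W \<longrightarrow> dim W \<le> q) \<and>
     p + q = dim V"

text \<open>G is the Gram matrix of an even unimodular lattice of signature (p,q),
  i.e. (up to isometry) of II_{p,q}.\<close>
definition even_unimodular_sig :: "real^22^22 \<Rightarrow> nat \<Rightarrow> nat \<Rightarrow> bool" where
  "even_unimodular_sig G p q \<longleftrightarrow>
     int_matrix G \<and> transpose G = G \<and> (det G = 1 \<or> det G = -1) \<and>
     (\<forall>x\<in>lat. \<exists>k::int. bf G x x = 2 * of_int k) \<and>
     has_signature G UNIV p q"

definition lattice_involution :: "real^22^22 \<Rightarrow> real^22^22 \<Rightarrow> bool" where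
  "lattice_involution G R \<longleftrightarrow>
     int_matrix R \<and> R ** R = mat 1 \<and>
     (\<forall>x\<in>lat. \<forall>y\<in>lat. bf G (R *v x) (R *v y) = bf G x y)"

definition eig_plus :: "real^22^22 \<Rightarrow> v22 set" where
  "eig_plus R = {x\<in>lat. R *v x = x}"

definition eig_minus :: "real^22^22 \<Rightarrow> v22 set" where
  "eig_minus R = {x\<in>lat. R *v x = - x}"

definition hyperbolic :: "real^22^22 \<Rightarrow> v22 set \<Rightarrow> bool" where
  "hyperbolic G M \<longleftrightarrow> (\<exists>n. has_signature G (span M) 1 n)"

definition dual_lat :: "real^22^22 \<Rightarrow> v22 set \<Rightarrow> v22 set" where
  "dual_lat G H = {v\<in>span H. \<forall>h\<in>H. bf G v h \<in> \<int>}"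

text \<open>2-elementary: H^*/H is an elementary abelian 2-group, i.e. 2 H^* \<subseteq> H.\<close>
definition two_elementary :: "real^22^22 \<Rightarrow> v22 set \<Rightarrow> bool" where
  "two_elementary G H \<longleftrightarrow> (\<forall>v\<in>dual_lat G H. 2 *\<^sub>R v \<in> H)"

definition primitive_in :: "v22 set \<Rightarrow> v22 \<Rightarrow> bool" where
  "primitive_in M e \<longleftrightarrow> e \<in> M \<and> e \<noteq> 0 \<and>
     (\<forall>y\<in>M. \<forall>n::int. e = of_int n *\<^sub>R y \<longrightarrow> \<bar>n\<bar> = 1)"

definition has_divisibility :: "real^22^22 \<Rightarrow> v22 set \<Rightarrow> v22 \<Rightarrow> int \<Rightarrow> bool" where
  "has_divisibility G M e d \<longleftrightarrow> d > 0 \<and>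
     (\<lambda>t. bf G e t) ` M = {of_int (d * k) | k. True}"

definition eperp :: "real^22^22 \<Rightarrow> v22 \<Rightarrow> v22 set" where
  "eperp G e = {x\<in>lat. bf G e x = 0}"

text \<open>Preimage in e^\<perp> of \<Lambda>_ias^+ = (e^\<perp>/e)^{\<rho>_ias}: classes [x] with \<rho>x - x \<in> Z e.\<close>
definition ias_plus_pre :: "real^22^22 \<Rightarrow> real^22^22 \<Rightarrow> v22 \<Rightarrow> v22 set" where
  "ias_plus_pre G R e = {x\<in>eperp G e. \<exists>k::int. R *v x - x = of_int k *\<^sub>R e}"

text \<open>Preimage in e^\<perp> of the image of S under e^\<perp> \<rightarrow> e^\<perp>/e: S + Z e.\<close>
definition S_pre :: "real^22^22 \<Rightarrow> v22 \<Rightarrow> v22 set" where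
  "S_pre R e = {s + of_int k *\<^sub>R e | s k. s \<in> eig_plus R}"

end

theory Submission
  imports Defs
begin

text \<open>Write \<open>\<Lambda>\<^sub>+ = ias_plus_pre\<close> for the preimage of \<open>\<Lambda>\<^sub>i\<^sub>a\<^sub>s\<^sup>+\<close> in \<open>e\<^sup>\<perp>\<close>.
  For \<open>x \<in> \<Lambda>\<^sub>+\<close> we have \<open>\<rho>x - x = k e\<close>, and \<open>x\<close> lies in \<open>S + \<int>e\<close> exactly when
  \<open>k\<close> is even (then \<open>x + (k/2) e\<close> is \<open>\<rho>\<close>-fixed). Pairing with \<open>t \<in> T\<close> gives
  \<open>k (e\<cdot>t) = -2 (x\<cdot>t)\<close>, so \<open>k\<close> is always even when \<open>e\<close> has divisibility 1. When
  it has divisibility 2, the integral functional \<open>-(e\<cdot>t)/2\<close> on \<open>T\<close> extends to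
  \<open>\<Lambda>\<^sub>K\<^sub>3\<close> (as \<open>T\<close> is primitive) and is represented by some \<open>p\<close> (unimodularity);
  then \<open>\<rho>p - p = e\<close>, so \<open>p\<close> is an odd class and \<open>S + \<int>e\<close> has index 2. The same
  extend-and-represent argument applied to \<open>S\<close> lifts every element of
  \<open>2(\<Lambda>\<^sub>i\<^sub>a\<^sub>s\<^sup>+)\<^sup>*\<close> to some \<open>x + \<rho>x\<close>, and \<open>p\<close> corrects the parity of \<open>e\<cdot>x\<close>.\<close>

lemmas matrix_vector_algebra =
  matrix_vector_right_distrib matrix_vector_mult_diff_distrib matrix_vector_mult_scaleR vec.neg

lemma lat_iff: "x \<in> lat \<longleftrightarrow> (\<forall>i. x$i \<in> \<int>)"
  by (simp add: lat_def)

lemma lat_zero: "0 \<in> lat"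
  and lat_add: "x \<in> lat \<Longrightarrow> y \<in> lat \<Longrightarrow> x + y \<in> lat"
  and lat_diff: "x \<in> lat \<Longrightarrow> y \<in> lat \<Longrightarrow> x - y \<in> lat"
  and lat_uminus: "x \<in> lat \<Longrightarrow> - x \<in> lat"
  and lat_scale: "x \<in> lat \<Longrightarrow> of_int k *\<^sub>R x \<in> lat"
  and lat_axis: "axis i 1 \<in> lat"
  by (auto simp: lat_iff axis_def)

lemma lat_inner_Ints: "x \<in> lat \<Longrightarrow> y \<in> lat \<Longrightarrow> x \<bullet> y \<in> \<int>"
  unfolding lat_iff inner_vec_def by (auto intro!: Ints_sum Ints_mult)

lemma int_matrix_mult_lat: "int_matrix M \<Longrightarrow> x \<in> lat \<Longrightarrow> M *v x \<in> lat"
  unfolding lat_iff int_matrix_def matrix_vector_mult_def by (auto intro!: Ints_sum Ints_mult)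

lemma det_Ints:
  fixes A :: "real^'n^'n"
  assumes "\<forall>i j. A$i$j \<in> \<int>"
  shows "det A \<in> \<int>"
  unfolding det_def using assms by (auto intro!: Ints_sum Ints_mult Ints_prod)

lemma bf_add_left: "bf G (x + y) z = bf G x z + bf G y z"
  and bf_add_right: "bf G z (x + y) = bf G z x + bf G z y"
  and bf_diff_left: "bf G (x - y) z = bf G x z - bf G y z"
  and bf_diff_right: "bf G z (x - y) = bf G z x - bf G z y"
  and bf_minus_left: "bf G (- x) z = - bf G x z"
  and bf_minus_right: "bf G z (- x) = - bf G z x"
  and bf_scaleR_left: "bf G (c *\<^sub>R x) z = c * bf G x z"
  and bf_scaleR_right: "bf G z (c *\<^sub>R x) = c * bf G z x"
  and bf_zero_left: "bf G 0 z = 0"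
  and bf_zero_right: "bf G z 0 = 0"
  by (simp_all add: bf_def inner_add_left inner_add_right inner_diff_left inner_diff_right
      matrix_vector_algebra)

lemmas bf_simps = bf_add_left bf_add_right bf_diff_left bf_diff_right bf_minus_left
  bf_minus_right bf_scaleR_left bf_scaleR_right bf_zero_left bf_zero_right

lemma linear_bf_right: "linear (\<lambda>z. c * bf G x z)"
  by (rule linearI) (simp_all add: bf_simps algebra_simps)

lemma bf_matrix_mult: "bf G (A *v x) (A *v y) = bf (transpose A ** G ** A) x y"
  unfolding bf_def by (metis dot_lmul_matrix matrix_vector_mul_assoc vector_transpose_matrix)

lemma bf_axis: "bf G (axis i 1) (axis j 1) = G$i$j"
  unfolding bf_def matrix_vector_mult_basis column_def
  by (subst inner_commute) (simp add: inner_axis)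

lemma subspace_eigenvectors: "subspace {x. (R::real^'n^'n) *v x = a *\<^sub>R x}"
  unfolding subspace_def by (auto simp: matrix_vector_algebra scaleR_add_right)

lemma eig_plus_zero: "0 \<in> eig_plus R"
  and eig_plus_add: "x \<in> eig_plus R \<Longrightarrow> y \<in> eig_plus R \<Longrightarrow> x + y \<in> eig_plus R"
  and eig_plus_uminus: "x \<in> eig_plus R \<Longrightarrow> - x \<in> eig_plus R"
  by (auto simp: eig_plus_def matrix_vector_algebra intro: lat_zero lat_add lat_uminus)

text \<open>\<open>g\<close> is the least positive value of \<open>c \<bullet> s\<close> over \<open>c \<in> lat\<close>; reducing each
  coordinate \<open>s$j = axis j 1 \<bullet> s\<close> modulo \<open>g\<close> shows that \<open>g\<close> divides all of them.\<close>
lemma lat_multiple_of_primitive: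
  assumes s: "s \<in> lat" "s \<noteq> 0"
  obtains v c and g :: int
  where "v \<in> lat" "c \<in> lat" "c \<bullet> v = 1" "g > 0" "s = of_int g *\<^sub>R v"
proof -
  define N where "N = {m::nat. m > 0 \<and> (\<exists>c\<in>lat. c \<bullet> s = real m)}"
  obtain i where i: "s$i \<noteq> 0" using s(2) by (metis vec_eq_iff zero_index)
  obtain k where k: "s$i = of_int k" using s(1) by (auto simp: lat_iff elim: Ints_cases)
  have "(of_int (sgn k) *\<^sub>R axis i 1) \<bullet> s = of_int (sgn k * k)"
    using k by (simp add: inner_commute[of _ s] inner_axis)
  also have "sgn k * k = int (nat \<bar>k\<bar>)" by (cases "k \<ge> 0") (auto simp: sgn_if)
  finally have "(of_int (sgn k) *\<^sub>R axis i 1) \<bullet> s = real (nat \<bar>k\<bar>)" by simp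
  then have "nat \<bar>k\<bar> \<in> N"
    unfolding N_def using i k by (auto intro!: bexI[of _ "of_int (sgn k) *\<^sub>R axis i 1"] lat_scale lat_axis)
  define g where "g = (LEAST m. m \<in> N)"
  have "g \<in> N" unfolding g_def using \<open>nat \<bar>k\<bar> \<in> N\<close> by (rule LeastI)
  then obtain c where c: "c \<in> lat" "c \<bullet> s = real g" "g > 0" unfolding N_def by auto
  have g_least: "g \<le> m" if "m \<in> N" for m unfolding g_def using that by (rule Least_le)
  have dvd: "\<exists>q::int. s$j = of_int q * real g" for j
  proof -
    obtain a where a: "s$j = of_int a" using s(1) by (auto simp: lat_iff elim: Ints_cases)
    define q where "q = a div int g"
    define r where "r = a mod int g"
    have a_qr: "a = q * int g + r" unfolding q_def r_def by simp
    have r: "0 \<le> r" "r < int g" unfolding r_def using c(3) by auto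
    have "(axis j 1 - of_int q *\<^sub>R c) \<bullet> s = of_int r"
      using a c(2) a_qr by (simp add: inner_diff_left inner_commute[of "axis j 1"] inner_axis)
    moreover have "axis j 1 - of_int q *\<^sub>R c \<in> lat" by (intro lat_diff lat_axis lat_scale c(1))
    ultimately have "r > 0 \<Longrightarrow> nat r \<in> N" unfolding N_def by (auto intro!: bexI)
    then have "r = 0" using g_least r by (metis le_less linorder_not_le nat_less_iff)
    then show ?thesis using a a_qr by auto
  qed
  define v where "v = (1 / real g) *\<^sub>R s"
  have "v \<in> lat" unfolding lat_iff v_def
  proof
    fix j obtain q where "s$j = of_int q * real g" using dvd by blast
    then show "((1 / real g) *\<^sub>R s) $ j \<in> \<int>" using c(3) by simp
  qed
  moreover have "c \<bullet> v = 1" "s = of_int (int g) *\<^sub>R v" unfolding v_def using c by simp_all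
  ultimately show ?thesis using c(1,3) by (intro that[of v c "int g"]) simp_all
qed

text \<open>Integral functionals on the saturated sublattice \<open>V \<inter> lat\<close> extend to \<open>lat\<close>:
  split off a primitive \<open>v \<in> V\<close> with \<open>c\<^sub>0 \<bullet> v = 1\<close> and recurse on \<open>V \<inter> c\<^sub>0\<^sup>\<perp>\<close>.\<close>
lemma integral_functional_extends:
  fixes f :: "real^22 \<Rightarrow> real"
  assumes "linear f" "subspace V" "\<And>x. x \<in> V \<inter> lat \<Longrightarrow> f x \<in> \<int>"
  shows "\<exists>c\<in>lat. \<forall>x\<in>V \<inter> lat. f x = c \<bullet> x"
  using assms(2,3)
proof (induction "dim V" arbitrary: V rule: less_induct)
  case less
  show ?case
  proof (cases "V \<inter> lat \<subseteq> {0}")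
    case True
    then show ?thesis using \<open>linear f\<close> by (auto intro!: bexI[of _ 0] lat_zero simp: linear_0)
  next
    case False
    then obtain s where s: "s \<in> V" "s \<in> lat" "s \<noteq> 0" by auto
    obtain v c0 and g :: int where v: "v \<in> lat" "c0 \<in> lat" "c0 \<bullet> v = 1" "g > 0"
      "s = of_int g *\<^sub>R v"
      using lat_multiple_of_primitive[OF s(2,3)] by metis
    have vV: "v \<in> V"
      using v(4,5) subspace_scale[OF less.prems(1) s(1), of "1 / of_int g"] by simp
    define V' where "V' = V \<inter> {x. c0 \<bullet> x = 0}"
    have sV': "subspace V'"
      unfolding V'_def using less.prems(1) by (intro subspace_inter subspace_hyperplane)
    have "v \<notin> V'" unfolding V'_def using v(3) by simp
    then have "V' \<subset> V" unfolding V'_def using vV by blast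
    then have "dim V' < dim V" using sV' less.prems(1) by (metis dim_psubset span_eq_iff)
    then obtain c1 where c1: "c1 \<in> lat" "\<forall>x\<in>V' \<inter> lat. f x = c1 \<bullet> x"
      using less.hyps sV' less.prems(2) unfolding V'_def by blast
    obtain fv cv where fv: "f v = of_int fv" and cv: "c1 \<bullet> v = of_int cv"
      using less.prems(2) vV v(1) lat_inner_Ints[OF c1(1) v(1)] by (metis IntI Ints_cases)
    define c where "c = c1 + of_int (fv - cv) *\<^sub>R c0"
    have "f x = c \<bullet> x" if x: "x \<in> V \<inter> lat" for x
    proof -
      obtain m where m: "c0 \<bullet> x = of_int m"
        using lat_inner_Ints[OF v(2)] x by (auto elim: Ints_cases)
      have "x - of_int m *\<^sub>R v \<in> V' \<inter> lat" unfolding V'_def using x vV v(1,3) m less.prems(1)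
        by (auto intro!: lat_diff lat_scale subspace_diff subspace_scale simp: inner_diff_right)
      then have "f (x - of_int m *\<^sub>R v) = c1 \<bullet> (x - of_int m *\<^sub>R v)" using c1(2) by blast
      then show ?thesis using \<open>linear f\<close> m fv cv unfolding c_def
        by (simp add: linear_diff linear_scale inner_add_left inner_diff_right algebra_simps)
    qed
    moreover have "c \<in> lat" unfolding c_def by (intro lat_add lat_scale c1(1) v(2))
    ultimately show ?thesis by blast
  qed
qed

lemma has_divisibility_values:
  assumes "has_divisibility G M e d"
  shows has_divisibility_dvd: "t \<in> M \<Longrightarrow> \<exists>k::int. bf G e t = of_int (d * k)"
    and has_divisibility_attained: "\<exists>t\<in>M. bf G e t = of_int d"
proof -
  have img: "(\<lambda>t. bf G e t) ` M = {of_int (d * k) | k. True}"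
    using assms unfolding has_divisibility_def by (rule conjunct2)
  show "t \<in> M \<Longrightarrow> \<exists>k::int. bf G e t = of_int (d * k)"
    using img by blast
  have "of_int (d * 1) \<in> (\<lambda>t. bf G e t) ` M" unfolding img by blast
  then show "\<exists>t\<in>M. bf G e t = of_int d" by auto
qed

lemma card_cosets_eq_2:
  fixes H K :: "'a::ab_group_add set"
  assumes H_zero: "0 \<in> H"
    and H_add: "\<And>x y. x \<in> H \<Longrightarrow> y \<in> H \<Longrightarrow> x + y \<in> H"
    and H_uminus: "\<And>x. x \<in> H \<Longrightarrow> - x \<in> H"
    and "H \<subseteq> K" "p \<in> K" "p \<notin> H"
    and two_classes: "\<And>x. x \<in> K \<Longrightarrow> x \<in> H \<or> x - p \<in> H"
  shows "card ((\<lambda>x. (\<lambda>q. x + q) ` H) ` K) = 2"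
proof -
  have coset_eq: "(\<lambda>q. x + q) ` H = (\<lambda>q. y + q) ` H" if "x - y \<in> H" for x y
  proof (intro equalityI image_subsetI)
    fix q assume "q \<in> H"
    show "x + q \<in> (\<lambda>q. y + q) ` H"
      using H_add[OF that \<open>q \<in> H\<close>] by (intro image_eqI[of _ _ "(x - y) + q"]) simp_all
    show "y + q \<in> (\<lambda>q. x + q) ` H"
      using H_add[OF H_uminus[OF that] \<open>q \<in> H\<close>] by (intro image_eqI[of _ _ "- (x - y) + q"]) simp_all
  qed
  have "(\<lambda>q. x + q) ` H \<in> {(\<lambda>q. 0 + q) ` H, (\<lambda>q. p + q) ` H}" if "x \<in> K" for x
    using two_classes[OF that] coset_eq[of x 0] coset_eq[of x p] by auto
  then have "(\<lambda>x. (\<lambda>q. x + q) ` H) ` K = {(\<lambda>q. 0 + q) ` H, (\<lambda>q. p + q) ` H}"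
    using \<open>H \<subseteq> K\<close> \<open>p \<in> K\<close> H_zero by blast
  moreover have "(\<lambda>q. 0 + q) ` H \<noteq> (\<lambda>q. p + q) ` H"
  proof
    assume "(\<lambda>q. 0 + q) ` H = (\<lambda>q. p + q) ` H"
    then have "p \<in> (\<lambda>q. 0 + q) ` H" using H_zero by (metis add.right_neutral image_eqI)
    then show False using \<open>p \<notin> H\<close> by auto
  qed
  ultimately show ?thesis by simp
qed

locale unimodular_form =
  fixes G :: "real^22^22"
  assumes int_matrix_G: "int_matrix G"
    and symmetric_G: "transpose G = G"
    and det_G: "det G = 1 \<or> det G = -1"
begin

lemma bf_commute: "bf G x y = bf G y x"
proof -
  have "x \<bullet> (G *v y) = (transpose G *v x) \<bullet> y"
    by (metis dot_lmul_matrix inner_commute vector_transpose_matrix)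
  then show ?thesis by (simp add: bf_def symmetric_G inner_commute)
qed

lemma bf_lat_Ints: "x \<in> lat \<Longrightarrow> y \<in> lat \<Longrightarrow> bf G x y \<in> \<int>"
  unfolding bf_def by (intro lat_inner_Ints int_matrix_mult_lat int_matrix_G)

lemma eq_0_if_orthogonal_lat:
  assumes "\<And>x. x \<in> lat \<Longrightarrow> bf G d x = 0"
  shows "d = 0"
proof -
  have "(G *v d)$i = bf G (axis i 1) d" for i
    by (simp add: bf_def inner_axis inner_commute[of "axis i 1"])
  then have "G *v d = 0" using assms lat_axis by (simp add: vec_eq_iff bf_commute)
  moreover have "invertible G" using det_G by (auto simp: invertible_det_nz)
  ultimately show ?thesis by (simp add: matrix_left_invertible_ker invertible_left_inverse)
qed

text \<open>By Cramer's rule \<open>G\<^sup>-\<^sup>1 c\<close> is integral since \<open>det G = \<plusminus>1\<close>.\<close>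
lemma lat_vector_represented:
  assumes "c \<in> lat"
  obtains y where "y \<in> lat" "\<And>x. bf G y x = c \<bullet> x"
proof -
  define y where "y = (\<chi> k. det (\<chi> i j. if j = k then c$i else G$i$j) / det G)"
  have "det G \<noteq> 0" using det_G by auto
  then have "G *v y = c" using cramer[of G y c] unfolding y_def by simp
  then have "bf G y x = c \<bullet> x" for x
    using bf_commute[of y x] by (simp add: bf_def inner_commute)
  moreover have "det (\<chi> i j. if j = k then c$i else G$i$j) \<in> \<int>" for k
    using int_matrix_G assms unfolding int_matrix_def lat_iff by (intro det_Ints) auto
  then have "y \<in> lat" unfolding lat_iff y_def using det_G by (auto simp: minus_in_Ints_iff)
  ultimately show ?thesis using that by blast
qed

end

locale unimodular_involution = unimodular_form +
  fixes R :: "real^22^22"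
  assumes involution: "lattice_involution G R"
begin

lemma R_R [simp]: "R *v (R *v x) = x"
  using involution unfolding lattice_involution_def by (simp add: matrix_vector_mul_assoc)

lemma R_lat: "x \<in> lat \<Longrightarrow> R *v x \<in> lat"
  using involution int_matrix_mult_lat unfolding lattice_involution_def by blast

lemma bf_R_R: "bf G (R *v x) (R *v y) = bf G x y"
proof -
  have "(transpose R ** G ** R)$i$j = G$i$j" for i j
    using involution lat_axis unfolding lattice_involution_def
    by (metis bf_axis bf_matrix_mult)
  then have "transpose R ** G ** R = G" by (simp add: vec_eq_iff)
  then show ?thesis by (simp add: bf_matrix_mult)
qed

lemma bf_R_left: "bf G (R *v x) y = bf G x (R *v y)"
  using bf_R_R[of "R *v x" y] by simp

lemma add_R_mem_eig_plus: "x \<in> lat \<Longrightarrow> x + R *v x \<in> eig_plus R"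
  by (auto simp: eig_plus_def matrix_vector_algebra intro: lat_add R_lat)

lemma diff_R_mem_eig_minus: "x \<in> lat \<Longrightarrow> x - R *v x \<in> eig_minus R"
  by (auto simp: eig_minus_def matrix_vector_algebra intro: lat_diff R_lat)

text \<open>Uses \<open>2x = (x + \<rho>x) + (x - \<rho>x)\<close>.\<close>
lemma eq_0_if_orthogonal_eigenlattices:
  assumes "\<And>s. s \<in> eig_plus R \<Longrightarrow> bf G d s = 0"
    and "\<And>t. t \<in> eig_minus R \<Longrightarrow> bf G d t = 0"
  shows "d = 0"
proof (rule eq_0_if_orthogonal_lat)
  fix x assume "x \<in> lat"
  then have "bf G d (x + R *v x) + bf G d (x - R *v x) = 0"
    using assms add_R_mem_eig_plus diff_R_mem_eig_minus by simp
  then show "bf G d x = 0" by (simp add: bf_simps)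
qed

lemma eigen_functional_represented:
  assumes "linear f" and integral: "\<And>x. x \<in> lat \<Longrightarrow> R *v x = a *\<^sub>R x \<Longrightarrow> f x \<in> \<int>"
  obtains y where "y \<in> lat" "\<And>x. x \<in> lat \<Longrightarrow> R *v x = a *\<^sub>R x \<Longrightarrow> f x = bf G y x"
proof -
  obtain c where "c \<in> lat" "\<forall>x\<in>{x. R *v x = a *\<^sub>R x} \<inter> lat. f x = c \<bullet> x"
    using integral_functional_extends[OF \<open>linear f\<close> subspace_eigenvectors] integral by blast
  moreover obtain y where "y \<in> lat" "\<And>x. bf G y x = c \<bullet> x"
    using lat_vector_represented[OF \<open>c \<in> lat\<close>] by blast
  ultimately show ?thesis using that by auto
qed

end

locale anti_invariant_isotropic = unimodular_involution +
  fixes e :: v22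
  assumes e_eig_minus: "e \<in> eig_minus R"
    and e_nonzero: "e \<noteq> 0"
    and e_isotropic: "bf G e e = 0"
begin

lemma e_lat: "e \<in> lat" and R_e: "R *v e = - e"
  using e_eig_minus by (auto simp: eig_minus_def)

lemma bf_e_fixed: "R *v s = s \<Longrightarrow> bf G e s = 0"
  using bf_R_R[of e s] by (simp add: R_e bf_simps)

lemma eig_plus_subset_eperp: "eig_plus R \<subseteq> eperp G e"
  using bf_e_fixed by (auto simp: eig_plus_def eperp_def)

lemma eig_plus_eq_if_diff_multiple_e:
  assumes "s1 \<in> eig_plus R" "s2 \<in> eig_plus R" "s1 - s2 = of_int k *\<^sub>R e"
  shows "s1 = s2"
proof -
  have "R *v (s1 - s2) = s1 - s2" using assms(1,2) by (simp add: eig_plus_def matrix_vector_algebra)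
  then have "of_int k *\<^sub>R e + of_int k *\<^sub>R e = 0"
    using assms(3) by (simp add: R_e matrix_vector_algebra eq_neg_iff_add_eq_0)
  then have "(of_int k + of_int k) *\<^sub>R e = 0" by (simp only: scaleR_add_left)
  then have "k = 0" using e_nonzero by simp
  then show ?thesis using assms(3) by simp
qed

lemma eig_plus_subset_ias_plus_pre: "eig_plus R \<subseteq> ias_plus_pre G R e"
  using eig_plus_subset_eperp by (auto simp: eig_plus_def ias_plus_pre_def intro!: exI[of _ 0])

lemma ias_plus_pre_iff:
  "x \<in> ias_plus_pre G R e \<longleftrightarrow>
     x \<in> lat \<and> bf G e x = 0 \<and> (\<exists>k::int. R *v x - x = of_int k *\<^sub>R e)"
  by (auto simp: ias_plus_pre_def eperp_def)

lemma S_pre_eq: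
  "S_pre R e = {x \<in> ias_plus_pre G R e. \<exists>k::int. R *v x - x = of_int (2 * k) *\<^sub>R e}"
proof safe
  fix x assume "x \<in> S_pre R e"
  then obtain s k where s: "s \<in> lat" "R *v s = s" and x: "x = s + of_int k *\<^sub>R e"
    by (auto simp: S_pre_def eig_plus_def)
  have Rx: "R *v x - x = of_int (2 * - k) *\<^sub>R e"
    unfolding x by (simp add: s(2) R_e matrix_vector_algebra algebra_simps scaleR_add_left[symmetric])
  moreover have "bf G e x = 0"
    using bf_e_fixed[OF s(2)] e_isotropic by (simp add: x bf_simps)
  moreover have "x \<in> lat" unfolding x by (intro lat_add lat_scale s(1) e_lat)
  ultimately show "x \<in> ias_plus_pre G R e" unfolding ias_plus_pre_iff by blast
  show "\<exists>k::int. R *v x - x = of_int (2 * k) *\<^sub>R e" using Rx by blast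
next
  fix x and k :: int
  assume "x \<in> ias_plus_pre G R e" and k: "R *v x - x = of_int (2 * k) *\<^sub>R e"
  then have "x + of_int k *\<^sub>R e \<in> lat" by (simp add: ias_plus_pre_iff lat_add lat_scale e_lat)
  moreover have "R *v (x + of_int k *\<^sub>R e) = x + of_int k *\<^sub>R e"
    using k by (simp add: R_e matrix_vector_algebra algebra_simps scaleR_add_left[symmetric])
  ultimately have "x + of_int k *\<^sub>R e \<in> eig_plus R" by (simp add: eig_plus_def)
  moreover have "x = (x + of_int k *\<^sub>R e) + of_int (- k) *\<^sub>R e" by simp
  ultimately show "x \<in> S_pre R e" unfolding S_pre_def by blast
qed

lemma S_pre_subset_ias_plus_pre: "S_pre R e \<subseteq> ias_plus_pre G R e"
  unfolding S_pre_eq by blast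

lemma S_pre_zero: "0 \<in> S_pre R e"
proof -
  have "0 = 0 + of_int 0 *\<^sub>R e" by simp
  then show ?thesis unfolding S_pre_def using eig_plus_zero by blast
qed

lemma S_pre_add:
  assumes "x \<in> S_pre R e" "y \<in> S_pre R e"
  shows "x + y \<in> S_pre R e"
proof -
  obtain s1 k1 s2 k2 where "s1 \<in> eig_plus R" "s2 \<in> eig_plus R"
    and "x = s1 + of_int k1 *\<^sub>R e" "y = s2 + of_int k2 *\<^sub>R e"
    using assms unfolding S_pre_def by blast
  moreover have "s1 + of_int k1 *\<^sub>R e + (s2 + of_int k2 *\<^sub>R e) = (s1 + s2) + of_int (k1 + k2) *\<^sub>R e"
    by (simp add: scaleR_add_left)
  ultimately show ?thesis unfolding S_pre_def using eig_plus_add by blast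
qed

lemma S_pre_uminus:
  assumes "x \<in> S_pre R e"
  shows "- x \<in> S_pre R e"
proof -
  obtain s k where "s \<in> eig_plus R" "x = s + of_int k *\<^sub>R e"
    using assms unfolding S_pre_def by blast
  moreover have "- (s + of_int k *\<^sub>R e) = - s + of_int (- k) *\<^sub>R e" by simp
  ultimately show ?thesis unfolding S_pre_def using eig_plus_uminus by blast
qed

lemma add_R_mem_S_pre:
  assumes "x \<in> lat"
  shows "x + R *v x \<in> S_pre R e"
proof -
  have "x + R *v x = (x + R *v x) + of_int 0 *\<^sub>R e" by simp
  then show ?thesis unfolding S_pre_def using add_R_mem_eig_plus[OF assms] by blast
qed

text \<open>Pairing \<open>\<rho>x - x = k e\<close> with \<open>t \<in> T\<close> gives \<open>k (e\<cdot>t) = -2 (x\<cdot>t)\<close>.\<close>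
lemma ias_plus_pre_eq_S_pre_if_divisibility_1:
  assumes "has_divisibility G (eig_minus R) e 1"
  shows "S_pre R e = ias_plus_pre G R e"
proof -
  obtain t where t: "t \<in> eig_minus R" "bf G e t = 1"
    using has_divisibility_attained[OF assms] by auto
  have "\<exists>j::int. R *v x - x = of_int (2 * j) *\<^sub>R e" if hx: "x \<in> ias_plus_pre G R e" for x
  proof -
    obtain k where x: "x \<in> lat" "R *v x - x = of_int k *\<^sub>R e"
      using hx unfolding ias_plus_pre_iff by blast
    have Rt: "t \<in> lat" "R *v t = - t" using t(1) by (auto simp: eig_minus_def)
    obtain j where j: "bf G x t = of_int j" using bf_lat_Ints[OF x(1) Rt(1)] Ints_cases by blast
    have "of_int k = bf G (R *v x - x) t" using x(2) t(2) by (simp add: bf_simps)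
    also have "\<dots> = - 2 * bf G x t" using Rt(2) by (simp add: bf_R_left bf_simps)
    finally have "k = 2 * - j" using j by linarith
    then show ?thesis using x(2) by blast
  qed
  then show ?thesis unfolding S_pre_eq by blast
qed

lemma span_ias_plus_pre:
  assumes "v \<in> span (ias_plus_pre G R e)"
  shows "bf G e v = 0" "\<exists>a. R *v v - v = a *\<^sub>R e"
proof -
  let ?U = "{z. bf G e z = 0 \<and> R *v z - z \<in> span {e}}"
  have "linear (\<lambda>z. R *v z - z)"
    by (intro linear_compose_sub matrix_vector_mul_linear linear_id[unfolded id_def])
  then have "subspace ((\<lambda>z. R *v z - z) -` span {e})"
    by (intro linear_subspace_vimage subspace_span)
  then have "subspace ?U"
    using linear_subspace_kernel[OF linear_bf_right[of 1 G e]] subspace_inter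
    by (simp add: vimage_def Collect_conj_eq)
  moreover have "ias_plus_pre G R e \<subseteq> ?U"
  proof
    fix x assume "x \<in> ias_plus_pre G R e"
    then obtain k where "bf G e x = 0" "R *v x - x = of_int k *\<^sub>R e"
      unfolding ias_plus_pre_iff by blast
    then show "x \<in> ?U" using span_mul[OF span_base[of e "{e}"], of "of_int k"] by simp
  qed
  ultimately have "v \<in> ?U" using assms span_minimal by blast
  then show "bf G e v = 0" "\<exists>a. R *v v - v = a *\<^sub>R e" by (auto simp: span_singleton)
qed

lemma half_add_R_mem_dual:
  assumes "x \<in> eperp G e"
  shows "(1/2) *\<^sub>R (x + R *v x) \<in> dual_lat G (ias_plus_pre G R e)"
proof -
  have x: "x \<in> lat" "bf G x e = 0" using assms bf_commute by (auto simp: eperp_def)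
  have "x + R *v x \<in> ias_plus_pre G R e"
    using add_R_mem_eig_plus[OF x(1)] eig_plus_subset_ias_plus_pre by blast
  then have "(1/2) *\<^sub>R (x + R *v x) \<in> span (ias_plus_pre G R e)" by (intro span_mul span_base)
  moreover have "bf G ((1/2) *\<^sub>R (x + R *v x)) h \<in> \<int>" if hh: "h \<in> ias_plus_pre G R e" for h
  proof -
    obtain k where h: "h \<in> lat" "R *v h - h = of_int k *\<^sub>R e"
      using hh unfolding ias_plus_pre_iff by blast
    then have "bf G ((1/2) *\<^sub>R (x + R *v x)) h = bf G x h"
      using x(2) by (simp add: bf_R_left bf_simps algebra_simps)
    then show ?thesis using bf_lat_Ints[OF x(1) h(1)] by simp
  qed
  ultimately show ?thesis by (simp add: dual_lat_def)
qed

lemma add_R_eq_double_dual: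
  assumes "x \<in> eperp G e"
  shows "\<exists>v\<in>dual_lat G (ias_plus_pre G R e). \<exists>c::real. x + R *v x = 2 *\<^sub>R v + c *\<^sub>R e"
  using half_add_R_mem_dual[OF assms] by (intro bexI[of _ "(1/2) *\<^sub>R (x + R *v x)"] exI[of _ 0]) simp_all

text \<open>Write \<open>v = w - (a/2) e\<close> with \<open>w\<close> real \<open>\<rho>\<close>-fixed. Then \<open>w\<cdot>\<close> is integral on
  \<open>S \<subseteq> \<Lambda>\<^sub>+\<close>, so it is \<open>x\<cdot>\<close> for some \<open>x \<in> lat\<close>, and \<open>x + \<rho>x - 2w\<close> is orthogonal
  to both \<open>S\<close> and \<open>T\<close>.\<close>
lemma dual_ias_plus_pre_lift:
  assumes v: "v \<in> dual_lat G (ias_plus_pre G R e)"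
  obtains x c where "x \<in> lat" "x + R *v x = 2 *\<^sub>R v + c *\<^sub>R e"
proof -
  have v_span: "v \<in> span (ias_plus_pre G R e)"
    and v_int: "\<And>h. h \<in> ias_plus_pre G R e \<Longrightarrow> bf G v h \<in> \<int>"
    using v by (auto simp: dual_lat_def)
  obtain a where "R *v v - v = a *\<^sub>R e" using span_ias_plus_pre(2)[OF v_span] by blast
  then have a: "R *v v = v + a *\<^sub>R e" by (simp add: algebra_simps)
  define w where "w = v + (a/2) *\<^sub>R e"
  have Rw: "R *v w = w"
    unfolding w_def by (simp add: a R_e matrix_vector_algebra algebra_simps flip: scaleR_add_left)
  have w_v: "bf G w s = bf G v s" if "s \<in> eig_plus R" for s
    using that bf_e_fixed by (simp add: w_def eig_plus_def bf_simps)
  have "1 * bf G w s \<in> \<int>" if "s \<in> lat" "R *v s = 1 *\<^sub>R s" for s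
    using that w_v v_int eig_plus_subset_ias_plus_pre by (auto simp: eig_plus_def)
  then obtain x where x: "x \<in> lat"
    "\<And>s. s \<in> lat \<Longrightarrow> R *v s = 1 *\<^sub>R s \<Longrightarrow> 1 * bf G w s = bf G x s"
    using eigen_functional_represented[OF linear_bf_right] by blast
  have "x + R *v x - 2 *\<^sub>R w = 0"
  proof (rule eq_0_if_orthogonal_eigenlattices)
    fix s assume "s \<in> eig_plus R"
    then show "bf G (x + R *v x - 2 *\<^sub>R w) s = 0"
      using x(2)[of s] by (auto simp: eig_plus_def bf_R_left bf_simps)
  next
    fix t assume t: "t \<in> eig_minus R"
    have "R *v (x + R *v x - 2 *\<^sub>R w) = x + R *v x - 2 *\<^sub>R w"
      using Rw by (simp add: matrix_vector_algebra)
    then show "bf G (x + R *v x - 2 *\<^sub>R w) t = 0"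
      using t bf_R_left[of "x + R *v x - 2 *\<^sub>R w" t] by (simp add: eig_minus_def bf_simps)
  qed
  then have "x + R *v x = 2 *\<^sub>R v + a *\<^sub>R e" by (simp add: w_def algebra_simps)
  then show ?thesis using that x(1) by blast
qed

end

locale divisibility_two = anti_invariant_isotropic +
  assumes divisibility_2: "has_divisibility G (eig_minus R) e 2"
begin


lemma obtain_bf_e_eq_2:
  obtains t where "t \<in> lat" "R *v t = - t" "bf G e t = 2"
  using has_divisibility_attained[OF divisibility_2] that by (auto simp: eig_minus_def)

lemma obtain_R_diff_eq_e:
  obtains p where "p \<in> ias_plus_pre G R e" "R *v p - p = e"
proof -
  have "(- 1/2) * bf G e t \<in> \<int>" if "t \<in> lat" "R *v t = (-1) *\<^sub>R t" for t
  proof -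
    have "t \<in> eig_minus R" using that by (simp add: eig_minus_def)
    then obtain k where "bf G e t = of_int (2 * k)"
      using has_divisibility_dvd[OF divisibility_2] by blast
    then show ?thesis by simp
  qed
  then obtain p where p: "p \<in> lat"
    and p_T: "\<And>t. t \<in> lat \<Longrightarrow> R *v t = (-1) *\<^sub>R t \<Longrightarrow> (- 1/2) * bf G e t = bf G p t"
    using eigen_functional_represented[OF linear_bf_right] by blast
  have "R *v p - p - e = 0"
  proof (rule eq_0_if_orthogonal_eigenlattices)
    fix s assume "s \<in> eig_plus R"
    then show "bf G (R *v p - p - e) s = 0"
      using bf_e_fixed by (simp add: eig_plus_def bf_R_left bf_simps)
  next
    fix t assume "t \<in> eig_minus R"
    then show "bf G (R *v p - p - e) t = 0"
      using p_T[of t] by (simp add: eig_minus_def bf_R_left bf_simps)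
  qed
  then have Rp: "R *v p = p + e" by (simp add: algebra_simps)
  have "bf G e p = bf G (R *v e) (R *v p)" by (simp add: bf_R_R)
  also have "\<dots> = - bf G e p"
    using e_isotropic by (simp add: Rp R_e bf_simps)
  finally have "bf G e p = 0" by simp
  moreover have "R *v p - p = of_int 1 *\<^sub>R e" by (simp add: Rp)
  ultimately have "p \<in> ias_plus_pre G R e" using p unfolding ias_plus_pre_iff by blast
  then show ?thesis using that by (simp add: Rp)
qed

lemma card_ias_plus_pre_mod_S_pre:
  "card ((\<lambda>x. (\<lambda>q. x + q) ` S_pre R e) ` ias_plus_pre G R e) = 2"
proof -
  obtain p where p: "p \<in> ias_plus_pre G R e" "R *v p - p = e" by (rule obtain_R_diff_eq_e)
  have "p \<notin> S_pre R e"
  proof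
    assume "p \<in> S_pre R e"
    then obtain k :: int where "e = of_int (2 * k) *\<^sub>R e" using p(2) S_pre_eq by auto
    then have "of_int (2 * k) = (1::real)" using e_nonzero
      by (metis scaleR_cancel_right scaleR_one)
    then have "2 * k = 1" by linarith
    then show False by presburger
  qed
  moreover have "x \<in> S_pre R e \<or> x - p \<in> S_pre R e" if x: "x \<in> ias_plus_pre G R e" for x
  proof -
    obtain k where k: "R *v x - x = of_int k *\<^sub>R e" using x unfolding ias_plus_pre_iff by blast
    have Rxp: "R *v (x - p) - (x - p) = of_int (k - 1) *\<^sub>R e"
      using k p(2) by (simp add: matrix_vector_algebra algebra_simps)
    moreover have "x - p \<in> lat" "bf G e (x - p) = 0"
      using x p(1) by (auto simp: ias_plus_pre_iff bf_simps intro: lat_diff)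
    ultimately have "x - p \<in> ias_plus_pre G R e" unfolding ias_plus_pre_iff by blast
    then show ?thesis
      using x k Rxp unfolding S_pre_eq by (cases "even k") (auto elim!: evenE oddE)
  qed
  ultimately show ?thesis
    using card_cosets_eq_2[OF S_pre_zero S_pre_add S_pre_uminus S_pre_subset_ias_plus_pre p(1)]
    by blast
qed

text \<open>After \<open>dual_ias_plus_pre_lift\<close>, \<open>e\<cdot>x\<close> is even: pairing \<open>x + \<rho>x\<close> with the
  odd class \<open>p\<close> gives \<open>2(x\<cdot>p) + x\<cdot>e = 2(v\<cdot>p)\<close>. Subtracting a multiple of \<open>t\<close> with
  \<open>e\<cdot>t = 2\<close> moves \<open>x\<close> into \<open>e\<^sup>\<perp>\<close> without changing \<open>x + \<rho>x\<close>.\<close>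
lemma dual_ias_plus_pre_eq_add_R:
  assumes v: "v \<in> dual_lat G (ias_plus_pre G R e)"
  shows "\<exists>x\<in>eperp G e. \<exists>c::real. 2 *\<^sub>R v = x + R *v x + c *\<^sub>R e"
proof -
  obtain x0 c where x0: "x0 \<in> lat" "x0 + R *v x0 = 2 *\<^sub>R v + c *\<^sub>R e"
    using dual_ias_plus_pre_lift[OF v] by blast
  obtain p where p: "p \<in> ias_plus_pre G R e" "R *v p - p = e" by (rule obtain_R_diff_eq_e)
  obtain t where t: "t \<in> lat" "R *v t = - t" "bf G e t = 2" by (rule obtain_bf_e_eq_2)
  have p_lat: "p \<in> lat" and "bf G e p = 0" using p(1) unfolding ias_plus_pre_iff by auto
  have Rp: "R *v p = p + e" using p(2) by (simp add: algebra_simps)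
  have "bf G x0 (p + R *v p) = bf G (x0 + R *v x0) p" by (simp add: bf_R_left bf_simps)
  also have "\<dots> = 2 * bf G v p"
    using x0(2) \<open>bf G e p = 0\<close> by (simp add: bf_simps)
  finally have "bf G x0 (p + R *v p) = 2 * bf G v p" .
  moreover have "bf G x0 (p + R *v p) = 2 * bf G x0 p + bf G e x0"
    unfolding Rp bf_add_right using bf_commute[of e x0] by simp
  ultimately have "2 * bf G x0 p + bf G e x0 = 2 * bf G v p" by simp
  moreover obtain i where "bf G x0 p = of_int i" using bf_lat_Ints[OF x0(1) p_lat] Ints_cases by blast
  moreover obtain j where "bf G v p = of_int j"
    using v p(1) by (auto simp: dual_lat_def elim!: Ints_cases)
  ultimately have x0_e: "bf G e x0 = 2 * of_int (j - i)" by simp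
  define x where "x = x0 - of_int (j - i) *\<^sub>R t"
  have "x \<in> lat" unfolding x_def by (intro lat_diff lat_scale x0(1) t(1))
  then have "x \<in> eperp G e" using x0_e t(3) by (simp add: x_def eperp_def bf_simps)
  moreover have "2 *\<^sub>R v = x + R *v x + (- c) *\<^sub>R e"
    using x0(2) t(2) by (simp add: x_def matrix_vector_algebra algebra_simps)
  ultimately show ?thesis by blast
qed

end

theorem lemma5p12:
  fixes G R :: "real^22^22" and e :: "real^22"
  assumes K3: "even_unimodular_sig G 3 19"
    and inv: "lattice_involution G R"
    and hypS: "hyperbolic G (eig_plus R)"
    and twoS: "two_elementary G (eig_plus R)"
    and prim: "primitive_in (eig_minus R) e"
    and iso: "bf G e e = 0"
  shows
    "eig_plus R \<subseteq> eperp G e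
     \<and> (\<forall>s1\<in>eig_plus R. \<forall>s2\<in>eig_plus R. (\<exists>k::int. s1 - s2 = of_int k *\<^sub>R e) \<longrightarrow> s1 = s2)
     \<and> eig_plus R \<subseteq> ias_plus_pre G R e
     \<and> (has_divisibility G (eig_minus R) e 1 \<longrightarrow> S_pre R e = ias_plus_pre G R e)
     \<and> (has_divisibility G (eig_minus R) e 2 \<longrightarrow>
          card ((\<lambda>x. (\<lambda>q. x + q) ` S_pre R e) ` ias_plus_pre G R e) = 2
          \<and> (\<forall>x\<in>eperp G e. x + R *v x \<in> S_pre R e)
          \<and> (\<forall>x\<in>eperp G e. \<exists>v\<in>dual_lat G (ias_plus_pre G R e). \<exists>c::real.
                x + R *v x = 2 *\<^sub>R v + c *\<^sub>R e)
          \<and> (\<forall>v\<in>dual_lat G (ias_plus_pre G R e). \<exists>x\<in>eperp G e. \<exists>c::real.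
                2 *\<^sub>R v = x + R *v x + c *\<^sub>R e))"
proof -
  interpret anti_invariant_isotropic G R e
    using K3 inv prim iso
    by unfold_locales (auto simp: even_unimodular_sig_def primitive_in_def)
  have divisibility_2_case:
    "card ((\<lambda>x. (\<lambda>q. x + q) ` S_pre R e) ` ias_plus_pre G R e) = 2
      \<and> (\<forall>v\<in>dual_lat G (ias_plus_pre G R e). \<exists>x\<in>eperp G e. \<exists>c::real.
            2 *\<^sub>R v = x + R *v x + c *\<^sub>R e)"
    if "has_divisibility G (eig_minus R) e 2"
  proof -
    interpret divisibility_two G R e using that by unfold_locales
    show ?thesis using card_ias_plus_pre_mod_S_pre dual_ias_plus_pre_eq_add_R by blast
  qed
  show ?thesis
    using eig_plus_subset_eperp eig_plus_subset_ias_plus_pre ias_plus_pre_eq_S_pre_if_divisibility_1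
      divisibility_2_case
    by (intro conjI impI ballI) (auto simp: eperp_def
        intro: eig_plus_eq_if_diff_multiple_e add_R_mem_S_pre add_R_eq_double_dual)
qed

end
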